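(* Fix $\bar x\ge0$ and let $Y=(Y_t)_{t\ge0}$ be a measurable real-valued path with $Y_0\le\bar x$ such that $\overline Y$ (its running supremum with initial maximum level $\bar x$) is continuous. Let $H=(H_t)_{t\ge0}$ be a measurable path with $H_t\le1$ for all $t\ge0$ (and such that the integrals below are well defined). Define $U_t=Y_t-\int_{0^+}^tH_s\,\mathrm d\overline Y_s$. Then the running supremum of $U$ with initial maximum level $\bar x$ satisfies $$\overline U_t=\overline Y_t-\int_{0^+}^tH_s\,\mathrm d\overline Y_s,\qquad t\ge0.$$
   Context: For a path $Y$ and $\bar x\ge Y_0$, $\overline Y_t:=\bar x\vee\sup_{0\le s\le t}Y_s$. $\int_{0^+}^t$ denotes the Stieltjes integral over $(0,t]$. *)

theory Defs
  imports "HOL-Analysis.Analysis"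
begin

text \<open>Running supremum of a path Y on [0,\<infinity>) with initial maximum level xbar:
  running_max xbar Y t = xbar \<squnion> sup_{0 \<le> s \<le> t} Y s  (for t \<ge> 0).
  For t < 0 it is extended constantly by its value at 0 (only so that it is a
  function on the whole real line, as required by the Lebesgue-Stieltjes
  measure below; it plays no role for t \<ge> 0).\<close>
definition running_max :: "real \<Rightarrow> (real \<Rightarrow> real) \<Rightarrow> real \<Rightarrow> real" where
  "running_max xbar Y t = max xbar (Sup (Y ` {0..max 0 t}))"

definition stieltjes_int :: "(real \<Rightarrow> real) \<Rightarrow> (real \<Rightarrow> real) \<Rightarrow> real \<Rightarrow> real" where
  "stieltjes_int F H t = (LINT s:{0<..t}|interval_measure F. H s)"

end

theory Submission
  imports Defs
begin

text \<open>Write \<open>M\<close> for the running maximum of \<open>Y\<close> and \<open>I t\<close> for the integral of \<open>H\<close> over \<open>(0, t]\<close> against \<open>dM\<close>.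
  Since \<open>H \<le> 1\<close>, the process \<open>M - I\<close> is nondecreasing, so
  \<open>Y r - I r \<le> M r - I r \<le> M t - I t\<close> for \<open>r \<le> t\<close>. Conversely, if \<open>Y r\<close> is close to
  \<open>M t\<close> then so is \<open>M r\<close>, i.e. \<open>(r, t]\<close> has small \<open>dM\<close>-measure, and absolute continuity
  of the integral makes \<open>I r\<close> close to \<open>I t\<close>; hence \<open>Y - I\<close> comes arbitrarily close to
  \<open>M t - I t\<close> on \<open>[0, t]\<close>.\<close>

lemma integral_excess_tendsto_0:
  fixes g :: "'a \<Rightarrow> real"
  assumes "integrable M g"
  shows "(\<lambda>n. \<integral>x. max 0 (\<bar>g x\<bar> - real n) \<partial>M) \<longlonglongrightarrow> 0"
proof -
  have "(\<lambda>n. \<integral>x. max 0 (\<bar>g x\<bar> - real n) \<partial>M) \<longlonglongrightarrow> (\<integral>x. 0 \<partial>M)"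
  proof (rule integral_dominated_convergence[where w = "\<lambda>x. \<bar>g x\<bar>"])
    show "AE x in M. (\<lambda>n. max 0 (\<bar>g x\<bar> - real n)) \<longlonglongrightarrow> 0"
    proof (rule AE_I2)
      fix x
      obtain k :: nat where "\<bar>g x\<bar> \<le> real k"
        using real_arch_simple by blast
      then have "\<forall>\<^sub>F n in sequentially. max 0 (\<bar>g x\<bar> - real n) = 0"
        unfolding eventually_sequentially by (intro exI[of _ k]) auto
      then show "(\<lambda>n. max 0 (\<bar>g x\<bar> - real n)) \<longlonglongrightarrow> 0"
        by (rule tendsto_eventually)
    qed
  qed (use assms in auto)
  then show ?thesis by simp
qed

lemma set_integral_small_on_small_sets:
  fixes g :: "'a \<Rightarrow> real"
  assumes g: "integrable M g" and e: "0 < e"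
  obtains d where "0 < d"
    and "\<And>A. A \<in> sets M \<Longrightarrow> emeasure M A < ennreal d \<Longrightarrow> \<bar>LINT x:A|M. g x\<bar> < e"
proof -
  let ?excess = "\<lambda>n x. max 0 (\<bar>g x\<bar> - real n)"
  obtain n :: nat where n: "(\<integral>x. ?excess n x \<partial>M) < e / 2"
    using order_tendstoD(2)[OF integral_excess_tendsto_0[OF g], of "e / 2"] e
    by (auto simp: eventually_sequentially)
  have excess_int: "integrable M (?excess n)"
    by (rule Bochner_Integration.integrable_bound[OF g]) (use g in auto)
  define d where "d = e / (2 * (real n + 1))"
  have "0 < d" using e by (simp add: d_def)
  moreover have "\<bar>LINT x:A|M. g x\<bar> < e"
    if A: "A \<in> sets M" and small: "emeasure M A < ennreal d" for A
  proof -
    have A_fin: "emeasure M A < \<infinity>"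
      using small by (simp add: order.strict_trans)
    have "measure M A < d"
      using small A_fin by (simp add: measure_def enn2real_less_iff)
    have ind_int: "integrable M (indicator A :: 'a \<Rightarrow> real)"
      using A A_fin by simp
    have restr_int: "integrable M (\<lambda>x. indicator A x * g x)"
      using integrable_mult_indicator[OF A g] by simp
    have "\<bar>LINT x:A|M. g x\<bar> \<le> (\<integral>x. \<bar>indicator A x * g x\<bar> \<partial>M)"
      using integral_norm_bound[of M "\<lambda>x. indicator A x * g x"]
      by (simp add: set_lebesgue_integral_def)
    also have "\<dots> \<le> (\<integral>x. real n * indicator A x + ?excess n x \<partial>M)"
      by (intro integral_mono integrable_abs restr_int
          Bochner_Integration.integrable_add integrable_mult_right ind_int excess_int)
         (auto simp: indicator_def)
    also have "\<dots> = real n * measure M A + (\<integral>x. ?excess n x \<partial>M)"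
      using ind_int excess_int A by (simp add: Int_absorb2 sets.sets_into_space)
    also have "real n * measure M A \<le> real n * d"
      using \<open>measure M A < d\<close> by (intro mult_left_mono) auto
    also have "real n * d \<le> e / 2"
      using e by (simp add: d_def field_simps)
    finally show ?thesis using n by linarith
  qed
  ultimately show ?thesis using that by blast
qed

lemma stieltjes_int_diff:
  assumes H: "set_integrable (interval_measure F) {0<..t} H" and "0 \<le> r" "r \<le> t"
  shows "stieltjes_int F H t - stieltjes_int F H r = (LINT s:{r<..t}|interval_measure F. H s)"
proof -
  have split: "{0<..t} = {0<..r} \<union> {r<..t}"
    using assms by auto
  have "set_integrable (interval_measure F) {0<..r} H"
       "set_integrable (interval_measure F) {r<..t} H"
    using assms by (auto intro: set_integrable_subset[OF H])
  then show ?thesis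
    unfolding stieltjes_int_def split by (simp add: set_integral_Un)
qed

lemma stieltjes_int_diff_le:
  assumes mono: "\<And>x y. x \<le> y \<Longrightarrow> F x \<le> F y" and right_cont: "\<And>a. continuous (at_right a) F"
    and H: "set_integrable (interval_measure F) {0<..t} H" and "0 \<le> r" "r \<le> t"
    and H_le1: "\<And>s. s \<in> {r<..t} \<Longrightarrow> H s \<le> 1"
  shows "stieltjes_int F H t - stieltjes_int F H r \<le> F t - F r"
proof -
  have fin: "emeasure (interval_measure F) {r<..t} < \<infinity>"
    using mono right_cont by (simp add: emeasure_interval_measure_Ioc_eq)
  have "stieltjes_int F H t - stieltjes_int F H r = (LINT s:{r<..t}|interval_measure F. H s)"
    using assms by (simp add: stieltjes_int_diff)
  also have "\<dots> \<le> (LINT s:{r<..t}|interval_measure F. 1)"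
    using assms fin by (intro set_integral_mono set_integrable_subset[OF H]) (auto simp: set_integrable_def)
  also have "\<dots> = F t - F r"
    using assms fin by (simp add: set_integral_const measure_interval_measure_Ioc)
  finally show ?thesis .
qed

lemma stieltjes_int_diff_small:
  assumes mono: "\<And>x y. x \<le> y \<Longrightarrow> F x \<le> F y" and right_cont: "\<And>a. continuous (at_right a) F"
    and H: "set_integrable (interval_measure F) {0<..t} H" and "0 < e"
  obtains d where "0 < d"
    and "\<And>r. 0 \<le> r \<Longrightarrow> r \<le> t \<Longrightarrow> F t - F r < d \<Longrightarrow>
           \<bar>stieltjes_int F H t - stieltjes_int F H r\<bar> < e"
proof -
  have "integrable (interval_measure F) (\<lambda>s. indicator {0<..t} s * H s)"
    using H by (simp add: set_integrable_def)
  then obtain d where "0 < d" and d: "\<And>A. A \<in> sets (interval_measure F) \<Longrightarrow>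
      emeasure (interval_measure F) A < ennreal d \<Longrightarrow>
      \<bar>LINT s:A|interval_measure F. indicator {0<..t} s * H s\<bar> < e"
    using set_integral_small_on_small_sets \<open>0 < e\<close> by blast
  have "\<bar>stieltjes_int F H t - stieltjes_int F H r\<bar> < e"
    if "0 \<le> r" "r \<le> t" "F t - F r < d" for r
  proof -
    have "emeasure (interval_measure F) {r<..t} < ennreal d"
      using that mono right_cont \<open>0 < d\<close> by (simp add: emeasure_interval_measure_Ioc_eq ennreal_lessI)
    from d[OF _ this] that show ?thesis
      by (simp add: stieltjes_int_diff[OF H] set_lebesgue_integral_def indicator_inter_arith[symmetric]
          Int_absorb2 ac_simps)
  qed
  with \<open>0 < d\<close> that show ?thesis by blast
qed

lemma running_max_nonpos:
  assumes "Y 0 \<le> xbar" and "t \<le> 0"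
  shows "running_max xbar Y t = xbar"
  using assms by (simp add: running_max_def)

lemma le_running_max:
  assumes "bdd_above (Y ` {0..t})" and "0 \<le> r" "r \<le> t"
  shows "Y r \<le> running_max xbar Y t"
proof -
  have "Y r \<le> Sup (Y ` {0..t})"
    using assms by (intro cSup_upper) auto
  then show ?thesis
    using assms by (simp add: running_max_def)
qed

lemma running_max_le:
  assumes "xbar \<le> c" and "0 \<le> t" and "\<And>r. 0 \<le> r \<Longrightarrow> r \<le> t \<Longrightarrow> Y r \<le> c"
  shows "running_max xbar Y t \<le> c"
  using assms by (auto simp: running_max_def intro!: cSup_least)

lemma running_max_mono:
  assumes "\<And>t. 0 \<le> t \<Longrightarrow> bdd_above (Y ` {0..t})" and "s \<le> t"
  shows "running_max xbar Y s \<le> running_max xbar Y t"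
proof -
  have "Sup (Y ` {0..max 0 s}) \<le> Sup (Y ` {0..max 0 t})"
    using assms by (intro cSup_subset_mono) auto
  then show ?thesis
    by (simp add: running_max_def)
qed

lemma running_max_continuous_at_right:
  assumes "Y 0 \<le> xbar" and "continuous_on {0..} (running_max xbar Y)"
  shows "continuous (at_right a) (running_max xbar Y)"
proof (cases "a < 0")
  case True
  then have "\<forall>\<^sub>F s in at_right a. running_max xbar Y s = running_max xbar Y a"
    using eventually_at_right_real[OF True] assms(1)
    by (auto simp: running_max_nonpos elim!: eventually_mono)
  then show ?thesis
    by (simp add: continuous_within tendsto_eventually)
next
  case False
  then have "continuous (at a within {0..}) (running_max xbar Y)"
    using assms(2) by (simp add: continuous_on_eq_continuous_within)
  then show ?thesis
    by (rule continuous_within_subset) (use False in auto)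
qed

lemma running_max_approx:
  assumes "bdd_above (Y ` {0..t})" and "0 \<le> t" and "0 < e"
    and "running_max xbar Y t \<noteq> xbar"
  obtains r where "0 \<le> r" "r \<le> t" "running_max xbar Y t - e < Y r"
proof -
  have "running_max xbar Y t = Sup (Y ` {0..t})"
    using assms by (auto simp: running_max_def max_def split: if_splits)
  then have "running_max xbar Y t - e < Sup (Y ` {0..t})"
    using \<open>0 < e\<close> by simp
  then show ?thesis
    using that assms by (subst (asm) less_cSup_iff) auto
qed

lemma running_max_diff:
  fixes xbar :: real and Y I :: "real \<Rightarrow> real"
  defines "M \<equiv> running_max xbar Y"
  assumes Y0: "Y 0 \<le> xbar" and Y_bdd: "\<And>t. 0 \<le> t \<Longrightarrow> bdd_above (Y ` {0..t})"
    and "0 \<le> t" and I0: "I 0 = 0"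
    and I_le: "\<And>r. 0 \<le> r \<Longrightarrow> r \<le> t \<Longrightarrow> I t - I r \<le> M t - M r"
    and I_small: "\<And>e. 0 < e \<Longrightarrow>
       \<exists>d>0. \<forall>r. 0 \<le> r \<longrightarrow> r \<le> t \<longrightarrow> M t - M r < d \<longrightarrow> \<bar>I t - I r\<bar> < e"
  shows "running_max xbar (\<lambda>s. Y s - I s) t = M t - I t"
proof (rule antisym)
  let ?U = "running_max xbar (\<lambda>s. Y s - I s) t"
  have U_le: "Y r - I r \<le> M t - I t" if "0 \<le> r" "r \<le> t" for r
    using le_running_max[OF Y_bdd[OF that(1)] that(1) order.refl, where xbar = xbar] I_le[OF that]
    unfolding M_def by linarith
  have M0: "M 0 = xbar"
    using Y0 by (simp add: M_def running_max_nonpos)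
  show "?U \<le> M t - I t"
    using I_le[of 0] \<open>0 \<le> t\<close> M0 I0 by (intro running_max_le U_le) auto
  have U_bdd: "bdd_above ((\<lambda>s. Y s - I s) ` {0..t})"
    using U_le by (intro bdd_aboveI) auto
  show "M t - I t \<le> ?U"
  proof (rule field_le_epsilon)
    fix e :: real assume "0 < e"
    then obtain d where "0 < d"
      and d: "\<And>r. 0 \<le> r \<Longrightarrow> r \<le> t \<Longrightarrow> M t - M r < d \<Longrightarrow> \<bar>I t - I r\<bar> < e / 2"
      using I_small[of "e / 2"] by auto
    show "M t - I t \<le> ?U + e"
    proof (cases "M t = xbar")
      case True
      then have "\<bar>I t\<bar> < e / 2"
        using d[of 0] \<open>0 \<le> t\<close> \<open>0 < d\<close> M0 I0 by simp
      moreover have "xbar \<le> ?U"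
        by (simp add: running_max_def)
      ultimately show ?thesis
        using True by linarith
    next
      case False
      then obtain r where r: "0 \<le> r" "r \<le> t" and "M t - min (e / 2) d < Y r"
        using running_max_approx[OF Y_bdd[OF \<open>0 \<le> t\<close>] \<open>0 \<le> t\<close>, of "min (e / 2) d"] \<open>0 < e\<close> \<open>0 < d\<close>
        unfolding M_def by auto
      moreover have "Y r \<le> M r"
        using le_running_max[OF Y_bdd[OF r(1)] r(1) order.refl, where xbar = xbar] unfolding M_def .
      ultimately have "\<bar>I t - I r\<bar> < e / 2" and "M t - e / 2 < Y r"
        using d[OF r] by auto
      then show ?thesis
        using le_running_max[OF U_bdd r, where xbar = xbar] by linarith
    qed
  qed
qed

theorem lemma3p1:
  fixes xbar :: real and Y H :: "real \<Rightarrow> real"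
  assumes xbar_nonneg: "0 \<le> xbar"
    and Y_meas: "Y \<in> borel_measurable borel"
    and Y0: "Y 0 \<le> xbar"
    and Y_bdd: "\<And>t. 0 \<le> t \<Longrightarrow> bdd_above (Y ` {0..t})"
    and Ybar_cont: "continuous_on {0..} (running_max xbar Y)"
    and H_meas: "H \<in> borel_measurable borel"
    and H_le1: "\<And>t. 0 \<le> t \<Longrightarrow> H t \<le> 1"
    and H_int: "\<And>t. 0 \<le> t \<Longrightarrow>
                   set_integrable (interval_measure (running_max xbar Y)) {0<..t} H"
  shows "\<forall>t\<ge>0. running_max xbar (\<lambda>s. Y s - stieltjes_int (running_max xbar Y) H s) t
                 = running_max xbar Y t - stieltjes_int (running_max xbar Y) H t"
proof (intro allI impI)
  fix t :: real assume "0 \<le> t"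
  let ?M = "running_max xbar Y" and ?I = "stieltjes_int (running_max xbar Y) H"
  have mono: "\<And>x y. x \<le> y \<Longrightarrow> ?M x \<le> ?M y"
    using Y_bdd by (rule running_max_mono)
  have right_cont: "\<And>a. continuous (at_right a) ?M"
    using Y0 Ybar_cont by (rule running_max_continuous_at_right)
  note H_int_t = H_int[OF \<open>0 \<le> t\<close>]
  show "running_max xbar (\<lambda>s. Y s - ?I s) t = ?M t - ?I t"
  proof (rule running_max_diff[OF Y0 Y_bdd \<open>0 \<le> t\<close>])
    show "?I 0 = 0"
      by (simp add: stieltjes_int_def set_lebesgue_integral_def)
    show "?I t - ?I r \<le> ?M t - ?M r" if "0 \<le> r" "r \<le> t" for r
      using stieltjes_int_diff_le[OF mono right_cont H_int_t that] H_le1 that by auto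
    show "\<exists>d>0. \<forall>r. 0 \<le> r \<longrightarrow> r \<le> t \<longrightarrow> ?M t - ?M r < d \<longrightarrow> \<bar>?I t - ?I r\<bar> < e"
      if "0 < e" for e
      using stieltjes_int_diff_small[OF mono right_cont H_int_t that] by metis
  qed
qed

end
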